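(* Let $\alpha\ge-1/2$, $a\ge1$, $j\in\{1,2,\dots\}$ and $k>0$. For $x,y\in\mathbb{R}_+$, $x\neq y$, let \[ I_k=\int_{-1}^1\int_0^1\xi^{-k}\beta_{\alpha+aj}(\xi)\exp\Big(-\frac{x^2+y^2+2xys}{4\xi}\Big)d\xi\,\Pi_{\alpha+aj}(ds). \] Then $I_k\le\dfrac{C_{\alpha,k}}{(x+y)^{2\alpha+1}(xy)^{aj}|x-y|^{2k}}$ with $C_{\alpha,k}$ independent of $j$, $x$, $y$.
   Context: For $m>-1$, $\beta_m(\xi)=\sqrt{\tfrac2\pi}\big(\frac{1-\xi^2}{2\xi}\big)^{1+m}\frac1{1-\xi^2}\big(\log\frac{1+\xi}{1-\xi}\big)^{-1/2}$, $\xi\in(0,1)$. For $\nu>-1/2$, $\Pi_\nu$ is the measure on $[-1,1]$ given by $\Pi_\nu(du)=\frac{(1-u^2)^{\nu-1/2}}{\sqrt\pi\,2^\nu\Gamma(\nu+1/2)}du$. *)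

theory Defs
  imports "HOL-Analysis.Analysis"
begin

definition beta_fun :: "real \<Rightarrow> real \<Rightarrow> real" where
  "beta_fun m \<xi> = sqrt (2 / pi) * ((1 - \<xi>\<^sup>2) / (2 * \<xi>)) powr (1 + m)
      * (1 / (1 - \<xi>\<^sup>2)) * (ln ((1 + \<xi>) / (1 - \<xi>))) powr (-1/2)"

definition Pi_meas :: "real \<Rightarrow> real measure" where
  "Pi_meas \<nu> = density lborel (\<lambda>u. indicator {-1..1} u *
      ennreal ((1 - u\<^sup>2) powr (\<nu> - 1/2) / (sqrt pi * 2 powr \<nu> * Gamma (\<nu> + 1/2))))"

definition I_int :: "real \<Rightarrow> real \<Rightarrow> real \<Rightarrow> real \<Rightarrow> ennreal" where
  "I_int \<nu> k x y = integral\<^sup>N (Pi_meas \<nu>) (\<lambda>s. integral\<^sup>N lborel (\<lambda>\<xi>.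
      indicator {0<..<1} \<xi> *
      ennreal (\<xi> powr (-k) * beta_fun \<nu> \<xi> * exp (-(x\<^sup>2 + y\<^sup>2 + 2 * x * y * s) / (4 * \<xi>)))))"

end

theory Submission
  imports Defs
begin

(* Write x\<^sup>2 + y\<^sup>2 + 2xys = (x-y)\<^sup>2 + 2xy(1+s) and bound
   \<beta>\<^sub>\<nu>(\<xi>) \<le> \<surd>(2/\<pi>) (2\<xi>)\<^bsup>-1-\<nu>\<^esup> \<xi>\<^bsup>-1/2\<^esup> and (1-s\<^sup>2)\<^bsup>\<nu>-1/2\<^esup> \<le> 2\<^bsup>\<nu>-1/2\<^esup> (1+s)\<^bsup>\<nu>-1/2\<^esup>.
   By Tonelli the s-integral becomes a truncated Gamma integral, which is at most
   \<Gamma>(\<nu>+1/2) (xy/2\<xi>)\<^bsup>-(\<nu>+1/2)\<^esup>, and at most e\<^sup>2 \<Gamma>(\<nu>+1/2) (xy/2\<xi>)\<^bsup>-m\<^esup> for any 0 < m \<le> \<nu>+1/2.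
   This \<Gamma>(\<nu>+1/2) cancels the normalisation of \<Pi>\<^sub>\<nu>, which is why the constant does not depend
   on \<nu> = \<alpha> + aj. What remains is
   \<integral>\<^sub>0\<^sup>1 \<xi>\<^bsup>-q-1\<^esup> exp(-(x-y)\<^sup>2/4\<xi>) d\<xi> = O(|x-y|\<^bsup>-2q\<^esup>).  Choosing m = \<nu>+1/2 when
   16xy \<ge> (x+y)\<^sup>2, and m = \<nu>-\<alpha> otherwise (then 4(x-y)\<^sup>2 \<ge> (x+y)\<^sup>2), produces the factor
   (x+y)\<^bsup>-(2\<alpha>+1)\<^esup>. *)

lemma nn_integral_gamma_kernel_le:
  fixes b l :: real
  assumes b: "b > 0" and l: "l > 0"
  shows "(\<integral>\<^sup>+ s. ennreal (indicator {-1..1} s * (1+s) powr (b-1) * exp (-(l*(1+s)))) \<partial>lborel)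
         \<le> ennreal (Gamma b * l powr (-b))"
proof -
  define f where "f = (\<lambda>s::real. ennreal (indicator {-1..} s * (1+s) powr (b-1) * exp (-(l*(1+s)))))"
  have f_meas: "f \<in> borel_measurable borel" unfolding f_def by measurable
  have f_rescaled: "f (-1 + (1/l) * r) = ennreal (l powr (1-b)) * ennreal (indicator {0..} r * r powr (b-1) / exp r)"
    for r :: real
  proof (cases "r \<ge> 0")
    case True
    have "(r/l) powr (b-1) = r powr (b-1) * l powr (1-b)"
      using True l by (simp add: powr_divide powr_minus_divide divide_simps powr_diff)
    then show ?thesis using True l
      by (simp add: f_def ennreal_mult'[symmetric] indicator_def exp_minus field_simps)
  next
    case False
    then have "r / l < 0" using l by (simp add: divide_neg_pos)
    then show ?thesis using False by (simp add: f_def indicator_def)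
  qed
  have "(\<integral>\<^sup>+ s. ennreal (indicator {-1..1} s * (1+s) powr (b-1) * exp (-(l*(1+s)))) \<partial>lborel)
        \<le> integral\<^sup>N lborel f"
    unfolding f_def by (intro nn_integral_mono ennreal_leI) (auto simp: indicator_def)
  also have "\<dots> = \<bar>1/l\<bar> * (\<integral>\<^sup>+r. f (-1 + (1/l) * r) \<partial>lborel)"
    using l by (intro nn_integral_real_affine f_meas) auto
  also have "\<dots> = ennreal (1/l) * (\<integral>\<^sup>+r. ennreal (l powr (1-b)) * ennreal (indicator {0..} r * r powr (b-1) / exp r) \<partial>lborel)"
    using l by (simp only: f_rescaled) simp
  also have "\<dots> = ennreal (1/l) * (ennreal (l powr (1-b)) * ennreal (Gamma b))"
    using b by (subst nn_integral_cmult) (auto simp: Gamma_conv_nn_integral_real)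
  also have "\<dots> = ennreal (Gamma b * l powr (-b))"
    using l b by (simp add: ennreal_mult'[symmetric] Gamma_real_pos powr_diff powr_minus field_simps)
  finally show ?thesis .
qed

lemma nn_integral_gamma_kernel_le_powr:
  fixes b l m :: real
  assumes b: "b > 0" and l: "l > 0" and m: "0 < m" "m \<le> b"
  shows "(\<integral>\<^sup>+ s. ennreal (indicator {-1..1} s * (1+s) powr (b-1) * exp (-(l*(1+s)))) \<partial>lborel)
         \<le> ennreal (exp 2 * Gamma b * l powr (-m))"
proof (cases "l \<ge> 1")
  case True
  have "Gamma b * l powr (-b) \<le> exp 2 * Gamma b * l powr (-m)"
    using True m b Gamma_real_pos[OF b] by (intro mult_mono powr_mono) (auto intro: order_trans[of _ 1])
  then show ?thesis using nn_integral_gamma_kernel_le[OF b l] by (meson ennreal_leI order_trans)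
next
  case False
  text \<open>For \<open>l < 1\<close> the kernel is dominated by \<open>e\<^sup>2\<close> times the kernel with \<open>l = 1\<close>, since \<open>1 + s \<le> 2\<close>.\<close>
  have kernel_le: "(1+s) powr (b-1) * exp (-(l*(1+s))) \<le> exp 2 * ((1+s) powr (b-1) * exp (-(1*(1+s))))"
    if "s \<in> {-1..1}" for s
  proof -
    have "0 \<le> l * (1+s)" using that l by simp
    then have "exp (-(l*(1+s))) \<le> exp 2 * exp (-(1*(1+s)))"
      using that by (simp add: exp_add[symmetric])
    then show ?thesis
      by (metis mult.left_commute mult_left_mono powr_ge_zero)
  qed
  have "(\<integral>\<^sup>+ s. ennreal (indicator {-1..1} s * (1+s) powr (b-1) * exp (-(l*(1+s)))) \<partial>lborel)
      \<le> (\<integral>\<^sup>+ s. ennreal (exp 2) * ennreal (indicator {-1..1} s * (1+s) powr (b-1) * exp (-(1*(1+s)))) \<partial>lborel)"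
    using kernel_le
    by (intro nn_integral_mono) (auto simp: indicator_def ennreal_mult'[symmetric] intro!: ennreal_leI)
  also have "\<dots> = ennreal (exp 2) * (\<integral>\<^sup>+ s. ennreal (indicator {-1..1} s * (1+s) powr (b-1) * exp (-(1*(1+s)))) \<partial>lborel)"
    by (intro nn_integral_cmult) measurable
  also have "\<dots> \<le> ennreal (exp 2) * ennreal (Gamma b)"
    using nn_integral_gamma_kernel_le[OF b, of 1] by (intro mult_left_mono) auto
  also have "\<dots> \<le> ennreal (exp 2 * Gamma b * l powr (-m))"
  proof -
    have "1 \<le> l powr (-m)"
      using False l m by (simp add: powr_minus one_le_inverse powr_le1)
    then have "exp 2 * Gamma b * 1 \<le> exp 2 * Gamma b * l powr (-m)"
      using Gamma_real_pos[OF b] by (intro mult_left_mono) auto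
    then show ?thesis by (simp add: ennreal_mult'[symmetric] ennreal_leI)
  qed
  finally show ?thesis .
qed

lemma power_le_exp:
  fixes z :: real
  assumes "z \<ge> 0" "n > 0"
  shows "z ^ n \<le> real n ^ n * exp z"
proof -
  have "z / real n \<le> exp (z / real n)"
    using exp_ge_add_one_self[of "z / real n"] by linarith
  then have "(z / real n) ^ n \<le> exp (z / real n) ^ n"
    using assms by (intro power_mono) auto
  also have "\<dots> = exp z" using assms by (simp flip: exp_of_nat_mult)
  finally show ?thesis using assms by (simp add: power_divide field_simps)
qed

lemma powr_mult_exp_inverse_le:
  fixes \<xi> A q :: real and n :: nat
  assumes \<xi>: "0 < \<xi>" "\<xi> < A" and n: "0 < n" "q + 1 \<le> real n"
  shows "\<xi> powr (-q-1) * exp (-A / (4*\<xi>)) \<le> real n ^ n * 4 ^ n * A powr (-q-1)"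
proof -
  define z where "z = A / (4*\<xi>)"
  have z: "z > 0" using \<xi> by (simp add: z_def)
  have "z ^ n \<le> real n ^ n * exp z" using power_le_exp[of z n] z n by simp
  then have "exp (-z) \<le> real n ^ n / z ^ n"
    using z by (simp add: exp_minus field_simps)
  moreover have "-A / (4*\<xi>) = -z" by (simp add: z_def)
  ultimately have "exp (-A / (4*\<xi>)) \<le> real n ^ n / z ^ n" by simp
  also have "\<dots> = (real n ^ n * 4 ^ n * A powr (- real n)) * \<xi> ^ n"
    using \<xi> by (simp add: z_def power_divide powr_minus powr_realpow field_simps power_mult_distrib)
  finally have exp_le: "exp (-A / (4*\<xi>)) \<le> (real n ^ n * 4 ^ n * A powr (- real n)) * \<xi> ^ n" .
  have pw: "\<xi> powr (-q-1) * \<xi> ^ n = \<xi> powr (real n - q - 1)"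
    using \<xi> by (simp add: powr_realpow[symmetric] powr_add[symmetric] algebra_simps)
  have "\<xi> powr (-q-1) * exp (-A / (4*\<xi>))
      \<le> \<xi> powr (-q-1) * ((real n ^ n * 4 ^ n * A powr (- real n)) * \<xi> ^ n)"
    using exp_le by (rule mult_left_mono) simp
  also have "\<dots> = real n ^ n * 4 ^ n * A powr (- real n) * \<xi> powr (real n - q - 1)"
    by (metis pw mult.left_commute)
  also have "\<dots> \<le> real n ^ n * 4 ^ n * A powr (- real n) * A powr (real n - q - 1)"
    using \<xi> n by (intro mult_left_mono powr_mono2) auto
  also have "\<dots> = real n ^ n * 4 ^ n * A powr (-q-1)"
    using \<xi> by (simp add: powr_add[symmetric])
  finally show ?thesis .
qed

(* n\<^sup>n 4\<^sup>n with n = \<lceil>q+1\<rceil> controls the integral over (0, A), and 1/q the tail over [A, \<infinity>). *)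
definition powr_exp_const :: "real \<Rightarrow> real" where
  "powr_exp_const q = real (nat \<lceil>q+1\<rceil>) ^ nat \<lceil>q+1\<rceil> * 4 ^ nat \<lceil>q+1\<rceil> + 1/q"

lemma powr_exp_const_nonneg: "q > 0 \<Longrightarrow> powr_exp_const q \<ge> 0"
  unfolding powr_exp_const_def by simp

lemma nn_integral_powr_exp_inverse_le:
  fixes q A :: real
  assumes q: "q > 0" and A: "A > 0"
  shows "(\<integral>\<^sup>+ \<xi>. ennreal (indicator {0<..<1} \<xi> * \<xi> powr (-q-1) * exp (-A / (4*\<xi>))) \<partial>lborel)
         \<le> ennreal (powr_exp_const q * A powr (-q))"
proof -
  define n where "n = nat \<lceil>q+1\<rceil>"
  define c where "c = real n ^ n * 4 ^ n"
  have n: "0 < n" "q + 1 \<le> real n" using q unfolding n_def by linarith+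
  have c: "c \<ge> 0" unfolding c_def by simp
  text \<open>Below \<open>A\<close> the exponential is traded for a power of \<open>\<xi>\<close>; above \<open>A\<close> it is dropped.\<close>
  have split_le: "ennreal (indicator {0<..<1} \<xi> * \<xi> powr (-q-1) * exp (-A / (4*\<xi>)))
      \<le> ennreal (c * A powr (-q-1)) * indicator {0<..<A} \<xi> + ennreal (\<xi> powr (-q-1)) * indicator {A..} \<xi>"
    for \<xi> :: real
  proof (cases "0 < \<xi> \<and> \<xi> < 1")
    case True
    have "\<xi> powr (-q-1) * exp (-A / (4*\<xi>)) \<le> c * A powr (-q-1)" if "\<xi> < A"
      using powr_mult_exp_inverse_le[of \<xi> A n q] True that n by (simp add: c_def)
    moreover have "\<xi> powr (-q-1) * exp (-A / (4*\<xi>)) \<le> \<xi> powr (-q-1)"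
      using True A by (simp add: mult_left_le)
    ultimately show ?thesis
      using True by (cases "\<xi> < A") (auto simp: indicator_def intro: ennreal_leI)
  qed (use c A in \<open>auto simp: indicator_def\<close>)
  have "(\<integral>\<^sup>+ \<xi>. ennreal (indicator {0<..<1} \<xi> * \<xi> powr (-q-1) * exp (-A / (4*\<xi>))) \<partial>lborel)
     \<le> (\<integral>\<^sup>+ \<xi>. ennreal (c * A powr (-q-1)) * indicator {0<..<A} \<xi> + ennreal (\<xi> powr (-q-1)) * indicator {A..} \<xi> \<partial>lborel)"
    by (intro nn_integral_mono split_le)
  also have "\<dots> = ennreal (c * A powr (-q-1)) * ennreal A + ennreal (A powr (-q) / q)"
  proof -
    have "((\<lambda>\<xi>. \<xi> powr (-q-1)) has_integral A powr (-q) / q) {A..}"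
      using has_integral_powr_to_inf[of "-q-1" A] q A by simp
    then have "(\<integral>\<^sup>+ \<xi>. ennreal (\<xi> powr (-q-1)) * indicator {A..} \<xi> \<partial>lborel) = ennreal (A powr (-q) / q)"
      by (intro nn_integral_has_integral_lebesgue') simp
    then show ?thesis
      using A by (subst nn_integral_add) (auto simp: nn_integral_cmult_indicator)
  qed
  also have "\<dots> = ennreal (powr_exp_const q * A powr (-q))"
    using A c q
    by (simp add: powr_exp_const_def c_def n_def ennreal_mult'[symmetric] ennreal_plus[symmetric]
        powr_add[symmetric] powr_diff field_simps del: ennreal_plus)
  finally show ?thesis .
qed

lemma beta_fun_nonneg:
  assumes "0 < \<xi>" "\<xi> < 1"
  shows "beta_fun \<nu> \<xi> \<ge> 0"
proof -
  have "\<xi>\<^sup>2 < 1" using assms by (simp add: abs_square_less_1)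
  then show ?thesis by (simp add: beta_fun_def)
qed

lemma beta_fun_le:
  fixes \<nu> \<xi> :: real
  assumes \<xi>: "0 < \<xi>" "\<xi> < 1" and \<nu>: "\<nu> \<ge> 0"
  shows "beta_fun \<nu> \<xi> \<le> sqrt (2/pi) * ((2*\<xi>) powr (-1-\<nu>) * \<xi> powr (-1/2))"
proof -
  have p: "0 < 1 - \<xi>\<^sup>2" using \<xi> by (simp add: abs_square_less_1)
  have "(1 - \<xi>\<^sup>2) powr (1 + \<nu>) = (1 - \<xi>\<^sup>2) * (1 - \<xi>\<^sup>2) powr \<nu>"
    using p by (simp add: powr_add)
  moreover have "(2*\<xi>) powr (-1-\<nu>) = 1 / (2 * \<xi>) powr (1 + \<nu>)"
    by (simp add: powr_minus_divide[symmetric])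
  ultimately have "((1 - \<xi>\<^sup>2) / (2 * \<xi>)) powr (1 + \<nu>) * (1 / (1 - \<xi>\<^sup>2))
        = (1 - \<xi>\<^sup>2) powr \<nu> * (2*\<xi>) powr (-1-\<nu>)"
    using \<xi> p by (simp add: powr_divide)
  also have "\<dots> \<le> (2*\<xi>) powr (-1-\<nu>)"
    using \<nu> p by (intro mult_left_le_one_le powr_le1) auto
  finally have frac_le: "((1 - \<xi>\<^sup>2) / (2 * \<xi>)) powr (1 + \<nu>) * (1 / (1 - \<xi>\<^sup>2)) \<le> (2*\<xi>) powr (-1-\<nu>)" .
  have "\<xi> \<le> ln (1 + \<xi>) - ln (1 - \<xi>)"
  proof -
    have "0 \<le> ln (1 + \<xi>)" using \<xi> by simp
    moreover have "ln (1 - \<xi>) \<le> -\<xi>" using ln_le_minus_one[of "1-\<xi>"] \<xi> by simp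
    ultimately show ?thesis by linarith
  qed
  then have "\<xi> \<le> ln ((1 + \<xi>) / (1 - \<xi>))"
    using \<xi> by (simp add: ln_div)
  then have log_le: "(ln ((1 + \<xi>) / (1 - \<xi>))) powr (-1/2) \<le> \<xi> powr (-1/2)"
    using \<xi> by (intro powr_mono2') auto
  have "beta_fun \<nu> \<xi> = sqrt (2/pi) * (((1 - \<xi>\<^sup>2) / (2 * \<xi>)) powr (1 + \<nu>) * (1 / (1 - \<xi>\<^sup>2)))
        * (ln ((1 + \<xi>) / (1 - \<xi>))) powr (-1/2)"
    by (simp add: beta_fun_def mult.assoc)
  also have "\<dots> \<le> sqrt (2/pi) * (2*\<xi>) powr (-1-\<nu>) * \<xi> powr (-1/2)"
    using frac_le log_le p by (intro mult_mono mult_left_mono) auto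
  finally show ?thesis by (simp add: mult.assoc)
qed

lemma one_minus_square_powr_le:
  fixes s p :: real
  assumes "-1 \<le> s" "s \<le> 1" "p \<ge> 0"
  shows "(1 - s\<^sup>2) powr p \<le> 2 powr p * (1+s) powr p"
proof -
  have "(1 - s\<^sup>2) powr p = (1-s) powr p * (1+s) powr p"
    using assms by (simp add: power2_eq_square algebra_simps flip: powr_mult)
  also have "\<dots> \<le> 2 powr p * (1+s) powr p"
    using assms by (intro mult_right_mono powr_mono2) auto
  finally show ?thesis .
qed

lemma Pi_beta_norm_eq:
  fixes \<nu> G :: real
  assumes "G > 0"
  shows "2 powr (\<nu>-1/2) * sqrt (2/pi) / (sqrt pi * 2 powr \<nu> * G) = 1 / (pi * G)"
proof -
  have "2 powr (\<nu>-1/2) * sqrt (2/pi) / (sqrt pi * 2 powr \<nu> * G)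
      = (2 powr \<nu> / sqrt 2) * (sqrt 2 / sqrt pi) / (sqrt pi * 2 powr \<nu> * G)"
    by (simp only: powr_diff powr_half_sqrt real_sqrt_divide powr_one)
  also have "\<dots> = 1 / (sqrt pi * sqrt pi * G)"
    using assms by (simp add: field_simps)
  also have "sqrt pi * sqrt pi = pi"
    by simp
  finally show ?thesis .
qed

lemma I_integrand_le:
  fixes \<nu> k x y s \<xi> :: real
  assumes \<nu>: "\<nu> \<ge> 1/2" and s: "s \<in> {-1..1}" and \<xi>: "\<xi> \<in> {0<..<1}"
  shows "(1 - s\<^sup>2) powr (\<nu> - 1/2) / (sqrt pi * 2 powr \<nu> * Gamma (\<nu> + 1/2))
           * (\<xi> powr (-k) * beta_fun \<nu> \<xi> * exp (-(x\<^sup>2 + y\<^sup>2 + 2 * x * y * s) / (4 * \<xi>)))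
         \<le> \<xi> powr (-k) * (2*\<xi>) powr (-1-\<nu>) * \<xi> powr (-1/2) * exp (-((x-y)\<^sup>2) / (4*\<xi>))
             / (pi * Gamma (\<nu> + 1/2))
           * ((1+s) powr ((\<nu>+1/2)-1) * exp (-((x*y/(2*\<xi>)) * (1+s))))"
proof -
  define N where "N = sqrt pi * 2 powr \<nu> * Gamma (\<nu> + 1/2)"
  have N: "N > 0" using \<nu> by (simp add: N_def Gamma_real_pos)
  have exp_split: "exp (-(x\<^sup>2 + y\<^sup>2 + 2 * x * y * s) / (4 * \<xi>))
      = exp (-((x-y)\<^sup>2) / (4*\<xi>)) * exp (-((x*y/(2*\<xi>)) * (1+s)))"
    using \<xi> by (simp add: power2_eq_square field_simps flip: exp_add)
  have "(1 - s\<^sup>2) powr (\<nu> - 1/2) / N * (\<xi> powr (-k) * beta_fun \<nu> \<xi> * exp (-(x\<^sup>2 + y\<^sup>2 + 2 * x * y * s) / (4 * \<xi>)))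
      \<le> 2 powr (\<nu> - 1/2) * (1+s) powr (\<nu> - 1/2) / N
         * (\<xi> powr (-k) * (sqrt (2/pi) * ((2*\<xi>) powr (-1-\<nu>) * \<xi> powr (-1/2)))
            * exp (-(x\<^sup>2 + y\<^sup>2 + 2 * x * y * s) / (4 * \<xi>)))"
    using \<nu> s \<xi> N beta_fun_nonneg[of \<xi> \<nu>]
    by (intro mult_mono mult_right_mono mult_left_mono divide_right_mono one_minus_square_powr_le
        beta_fun_le) auto
  also have "\<dots> = 2 powr (\<nu>-1/2) * sqrt (2/pi) / N
      * (\<xi> powr (-k) * (2*\<xi>) powr (-1-\<nu>) * \<xi> powr (-1/2) * exp (-((x-y)\<^sup>2) / (4*\<xi>)))
      * ((1+s) powr ((\<nu>+1/2)-1) * exp (-((x*y/(2*\<xi>)) * (1+s))))"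
    unfolding exp_split by (simp add: mult_ac)
  also have "2 powr (\<nu>-1/2) * sqrt (2/pi) / N = 1 / (pi * Gamma (\<nu> + 1/2))"
    unfolding N_def using \<nu> by (intro Pi_beta_norm_eq Gamma_real_pos) simp
  finally show ?thesis by (simp add: N_def)
qed

lemma I_int_le_iterated:
  fixes \<nu> k x y :: real
  assumes \<nu>: "\<nu> \<ge> 1/2"
  shows "I_int \<nu> k x y
    \<le> (\<integral>\<^sup>+\<xi>. ennreal (indicator {0<..<1} \<xi> * (\<xi> powr (-k) * (2*\<xi>) powr (-1-\<nu>) * \<xi> powr (-1/2)
            * exp (-((x-y)\<^sup>2) / (4*\<xi>)) / (pi * Gamma (\<nu> + 1/2))))
        * (\<integral>\<^sup>+ s. ennreal (indicator {-1..1} s * (1+s) powr ((\<nu>+1/2)-1) * exp (-((x*y/(2*\<xi>)) * (1+s))))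
            \<partial>lborel) \<partial>lborel)" (is "_ \<le> ?rhs")
proof -
  define F where "F s \<xi> = indicator {0<..<1} \<xi>
      * ennreal (\<xi> powr (-k) * beta_fun \<nu> \<xi> * exp (-(x\<^sup>2 + y\<^sup>2 + 2 * x * y * s) / (4 * \<xi>)))"
    for s \<xi> :: real
  define dens where "dens s = indicator {-1..1} s
      * ennreal ((1 - s\<^sup>2) powr (\<nu> - 1/2) / (sqrt pi * 2 powr \<nu> * Gamma (\<nu> + 1/2)))"
    for s :: real
  define G where "G s \<xi> = ennreal (indicator {0<..<1} \<xi> * (\<xi> powr (-k) * (2*\<xi>) powr (-1-\<nu>)
        * \<xi> powr (-1/2) * exp (-((x-y)\<^sup>2) / (4*\<xi>)) / (pi * Gamma (\<nu> + 1/2))))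
      * ennreal (indicator {-1..1} s * (1+s) powr ((\<nu>+1/2)-1) * exp (-((x*y/(2*\<xi>)) * (1+s))))"
    for s \<xi> :: real
  have F_meas: "case_prod F \<in> borel_measurable (lborel \<Otimes>\<^sub>M lborel)"
    unfolding F_def beta_fun_def by measurable
  have G_meas: "(\<lambda>(\<xi>, s). G s \<xi>) \<in> borel_measurable (lborel \<Otimes>\<^sub>M lborel)"
    unfolding G_def by measurable
  have \<Gamma>: "Gamma (\<nu> + 1/2) > 0" using \<nu> by (simp add: Gamma_real_pos)
  have "I_int \<nu> k x y = (\<integral>\<^sup>+ s. (\<integral>\<^sup>+ \<xi>. F s \<xi> \<partial>lborel) \<partial>Pi_meas \<nu>)"
    by (simp add: I_int_def F_def)
  also have "\<dots> = (\<integral>\<^sup>+ s. dens s * (\<integral>\<^sup>+ \<xi>. F s \<xi> \<partial>lborel) \<partial>lborel)"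
    unfolding Pi_meas_def dens_def by (rule nn_integral_density) (use F_meas in measurable)
  also have "\<dots> = (\<integral>\<^sup>+ s. (\<integral>\<^sup>+ \<xi>. dens s * F s \<xi> \<partial>lborel) \<partial>lborel)"
    by (intro nn_integral_cong nn_integral_cmult[symmetric]) (use F_meas in measurable)
  also have "\<dots> \<le> (\<integral>\<^sup>+ s. (\<integral>\<^sup>+ \<xi>. G s \<xi> \<partial>lborel) \<partial>lborel)"
  proof (intro nn_integral_mono)
    fix s \<xi> :: real
    show "dens s * F s \<xi> \<le> G s \<xi>"
    proof (cases "s \<in> {-1..1} \<and> \<xi> \<in> {0<..<1}")
      case True
      then show ?thesis
        using I_integrand_le[OF \<nu>, of s \<xi> k x y] \<Gamma>
        by (simp add: dens_def F_def G_def ennreal_mult'[symmetric] ennreal_leI)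
    qed (auto simp: dens_def F_def G_def)
  qed
  also have "\<dots> = (\<integral>\<^sup>+ \<xi>. (\<integral>\<^sup>+ s. G s \<xi> \<partial>lborel) \<partial>lborel)"
    using lborel_pair.Fubini'[OF G_meas] by simp
  also have "\<dots> = ?rhs"
    unfolding G_def by (intro nn_integral_cong nn_integral_cmult) measurable
  finally show ?thesis .
qed

lemma kernel_powr_eq:
  fixes \<xi> P m \<nu> k :: real
  assumes "\<xi> > 0" "P > 0"
  shows "\<xi> powr (-k) * (2*\<xi>) powr (-1-\<nu>) * \<xi> powr (-1/2) * (P/(2*\<xi>)) powr (-m)
       = 2 powr (m-1-\<nu>) * P powr (-m) * \<xi> powr (-(k+\<nu>+1/2-m)-1)"
proof -
  have "(P/(2*\<xi>)) powr (-m) = P powr (-m) * (2 powr m * \<xi> powr m)"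
    using assms by (simp add: powr_divide powr_mult powr_minus field_simps)
  moreover have "(2*\<xi>) powr (-1-\<nu>) = 2 powr (-1-\<nu>) * \<xi> powr (-1-\<nu>)"
    using assms by (simp add: powr_mult)
  moreover have "\<xi> powr (-(k+\<nu>+1/2-m)-1) = \<xi> powr (-k) * \<xi> powr (-1-\<nu>) * \<xi> powr (-1/2) * \<xi> powr m"
    using assms by (simp add: powr_add[symmetric] algebra_simps)
  moreover have "2 powr (m-1-\<nu>) = 2 powr (-1-\<nu>) * 2 powr m"
    by (simp add: powr_add[symmetric] algebra_simps)
  ultimately show ?thesis by (simp add: mult_ac)
qed

lemma I_int_le_of_kernel_bound:
  fixes \<nu> k x y m c :: real
  assumes \<nu>: "\<nu> \<ge> 1/2" and x: "x > 0" and y: "y > 0" and xy: "x \<noteq> y"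
    and pos: "k + \<nu> + 1/2 - m > 0" and c: "c \<ge> 0"
    and kernel: "\<And>l. l > 0 \<Longrightarrow>
      (\<integral>\<^sup>+ s. ennreal (indicator {-1..1} s * (1+s) powr ((\<nu>+1/2)-1) * exp (-(l*(1+s)))) \<partial>lborel)
        \<le> ennreal (c * Gamma (\<nu> + 1/2) * l powr (-m))"
  shows "I_int \<nu> k x y \<le> ennreal (c / pi * 2 powr (m-1-\<nu>) * (x*y) powr (-m)
      * powr_exp_const (k+\<nu>+1/2-m) * ((x-y)\<^sup>2) powr (-(k+\<nu>+1/2-m)))"
proof -
  define q where "q = k + \<nu> + 1/2 - m"
  define A where "A = (x-y)\<^sup>2"
  define P where "P = x*y"
  define C where "C = c / pi * 2 powr (m-1-\<nu>) * P powr (-m)"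
  have A: "A > 0" and P: "P > 0" using x y xy by (simp_all add: A_def P_def)
  have C: "C \<ge> 0" using c by (simp add: C_def)
  have \<Gamma>: "Gamma (\<nu> + 1/2) > 0" using \<nu> by (simp add: Gamma_real_pos)
  have pointwise: "ennreal (indicator {0<..<1} \<xi> * (\<xi> powr (-k) * (2*\<xi>) powr (-1-\<nu>) * \<xi> powr (-1/2)
          * exp (-A / (4*\<xi>)) / (pi * Gamma (\<nu> + 1/2))))
        * (\<integral>\<^sup>+ s. ennreal (indicator {-1..1} s * (1+s) powr ((\<nu>+1/2)-1) * exp (-((P/(2*\<xi>)) * (1+s))))
            \<partial>lborel)
      \<le> ennreal C * ennreal (indicator {0<..<1} \<xi> * \<xi> powr (-q-1) * exp (-A / (4*\<xi>)))" for \<xi> :: real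
  proof (cases "\<xi> \<in> {0<..<1}")
    case True
    define E where "E = \<xi> powr (-k) * (2*\<xi>) powr (-1-\<nu>) * \<xi> powr (-1/2) * exp (-A / (4*\<xi>)) / (pi * Gamma (\<nu> + 1/2))"
    have E: "E \<ge> 0" using \<Gamma> by (simp add: E_def)
    have "E * (c * Gamma (\<nu> + 1/2) * (P/(2*\<xi>)) powr (-m))
        = c / pi * (\<xi> powr (-k) * (2*\<xi>) powr (-1-\<nu>) * \<xi> powr (-1/2) * (P/(2*\<xi>)) powr (-m))
          * exp (-A / (4*\<xi>))"
      using \<Gamma> by (simp add: E_def)
    also have "\<dots> = C * (\<xi> powr (-q-1) * exp (-A / (4*\<xi>)))"
    proof -
      have \<xi>: "\<xi> > 0" using True by simp
      show ?thesis unfolding kernel_powr_eq[OF \<xi> P] C_def q_def by (simp add: mult_ac)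
    qed
    finally have E_eq: "E * (c * Gamma (\<nu> + 1/2) * (P/(2*\<xi>)) powr (-m))
        = C * (\<xi> powr (-q-1) * exp (-A / (4*\<xi>)))" .
    have "ennreal E * (\<integral>\<^sup>+ s. ennreal (indicator {-1..1} s * (1+s) powr ((\<nu>+1/2)-1)
          * exp (-((P/(2*\<xi>)) * (1+s)))) \<partial>lborel)
        \<le> ennreal E * ennreal (c * Gamma (\<nu> + 1/2) * (P/(2*\<xi>)) powr (-m))"
      using True P by (intro mult_left_mono kernel) auto
    also have "\<dots> = ennreal C * ennreal (\<xi> powr (-q-1) * exp (-A / (4*\<xi>)))"
      using E C by (simp add: ennreal_mult'[symmetric] E_eq)
    finally show ?thesis
      using True by (simp add: E_def)
  qed simp
  have "I_int \<nu> k x y \<le> (\<integral>\<^sup>+\<xi>. ennreal (indicator {0<..<1} \<xi> * (\<xi> powr (-k) * (2*\<xi>) powr (-1-\<nu>)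
          * \<xi> powr (-1/2) * exp (-A / (4*\<xi>)) / (pi * Gamma (\<nu> + 1/2))))
        * (\<integral>\<^sup>+ s. ennreal (indicator {-1..1} s * (1+s) powr ((\<nu>+1/2)-1) * exp (-((P/(2*\<xi>)) * (1+s))))
            \<partial>lborel) \<partial>lborel)"
    unfolding A_def P_def by (rule I_int_le_iterated[OF \<nu>])
  also have "\<dots> \<le> (\<integral>\<^sup>+\<xi>. ennreal C * ennreal (indicator {0<..<1} \<xi> * \<xi> powr (-q-1) * exp (-A / (4*\<xi>))) \<partial>lborel)"
    by (intro nn_integral_mono pointwise)
  also have "\<dots> = ennreal C * (\<integral>\<^sup>+\<xi>. ennreal (indicator {0<..<1} \<xi> * \<xi> powr (-q-1) * exp (-A / (4*\<xi>))) \<partial>lborel)"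
    by (intro nn_integral_cmult) measurable
  also have "\<dots> \<le> ennreal C * ennreal (powr_exp_const q * A powr (-q))"
    using pos A by (intro mult_left_mono nn_integral_powr_exp_inverse_le) (simp_all add: q_def)
  also have "\<dots> = ennreal (C * (powr_exp_const q * A powr (-q)))"
    using C by (simp add: ennreal_mult')
  finally show ?thesis by (simp add: C_def q_def A_def P_def mult.assoc)
qed

lemma powr_neg_le_of_le:
  fixes t u c e :: real
  assumes "0 < t" "c > 0" "t \<le> c * u" "e \<ge> 0"
  shows "u powr (-e) \<le> c powr e * t powr (-e)"
proof -
  have "u powr (-e) \<le> (t / c) powr (-e)"
    using assms by (intro powr_mono2') (auto simp: field_simps)
  also have "\<dots> = c powr e * t powr (-e)"
    using assms by (simp add: powr_divide powr_minus field_simps)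
  finally show ?thesis .
qed

lemma I_int_le_comparable:
  fixes \<alpha> \<nu> k x y :: real
  assumes \<alpha>: "\<alpha> \<ge> -1/2" and \<nu>: "\<nu> \<ge> \<alpha> + 1" and k: "k > 0"
    and x: "x > 0" and y: "y > 0" and xy: "x \<noteq> y" and comparable: "(x+y)\<^sup>2 \<le> 16 * (x*y)"
  shows "I_int \<nu> k x y \<le> ennreal (2 powr (-1/2) / pi * powr_exp_const k * 16 powr (\<alpha>+1/2)
      * ((x+y)\<^sup>2) powr (-(\<alpha>+1/2)) * (x*y) powr (-(\<nu>-\<alpha>)) * ((x-y)\<^sup>2) powr (-k))"
proof -
  define e where "e = \<alpha> + 1/2"
  have e: "e \<ge> 0" using \<alpha> by (simp add: e_def)
  have "(x*y) powr (-(\<nu>+1/2)) = (x*y) powr (-e) * (x*y) powr (-(\<nu>-\<alpha>))"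
  proof -
    have "-(\<nu>+1/2) = -e + -(\<nu>-\<alpha>)" by (simp add: e_def)
    then show ?thesis by (simp only: powr_add)
  qed
  also have "\<dots> \<le> 16 powr e * ((x+y)\<^sup>2) powr (-e) * (x*y) powr (-(\<nu>-\<alpha>))"
    using x y xy comparable e by (intro mult_right_mono powr_neg_le_of_le) auto
  finally have xy_le: "(x*y) powr (-(\<nu>+1/2)) \<le> 16 powr e * ((x+y)\<^sup>2) powr (-e) * (x*y) powr (-(\<nu>-\<alpha>))" .
  have "I_int \<nu> k x y \<le> ennreal (1 / pi * 2 powr ((\<nu>+1/2)-1-\<nu>) * (x*y) powr (-(\<nu>+1/2))
      * powr_exp_const (k+\<nu>+1/2-(\<nu>+1/2)) * ((x-y)\<^sup>2) powr (-(k+\<nu>+1/2-(\<nu>+1/2))))"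
    using \<nu> \<alpha> x y xy k nn_integral_gamma_kernel_le[of "\<nu>+1/2"]
    by (intro I_int_le_of_kernel_bound) auto
  also have "\<dots> = ennreal (2 powr (-1/2) / pi * powr_exp_const k * ((x-y)\<^sup>2) powr (-k) * (x*y) powr (-(\<nu>+1/2)))"
    by (simp add: mult_ac)
  also have "\<dots> \<le> ennreal (2 powr (-1/2) / pi * powr_exp_const k * ((x-y)\<^sup>2) powr (-k)
      * (16 powr e * ((x+y)\<^sup>2) powr (-e) * (x*y) powr (-(\<nu>-\<alpha>))))"
    using xy_le k powr_exp_const_nonneg[OF k] by (intro ennreal_leI mult_left_mono) auto
  finally show ?thesis by (simp add: e_def mult_ac)
qed

lemma I_int_le_separated:
  fixes \<alpha> \<nu> k x y :: real
  assumes \<alpha>: "\<alpha> \<ge> -1/2" and \<nu>: "\<nu> \<ge> \<alpha> + 1" and k: "k > 0"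
    and x: "x > 0" and y: "y > 0" and xy: "x \<noteq> y" and separated: "(x+y)\<^sup>2 \<le> 4 * (x-y)\<^sup>2"
  shows "I_int \<nu> k x y \<le> ennreal (exp 2 * 2 powr (-1-\<alpha>) / pi * powr_exp_const (k+\<alpha>+1/2) * 4 powr (\<alpha>+1/2)
      * ((x+y)\<^sup>2) powr (-(\<alpha>+1/2)) * (x*y) powr (-(\<nu>-\<alpha>)) * ((x-y)\<^sup>2) powr (-k))"
proof -
  define e where "e = \<alpha> + 1/2"
  have e: "e \<ge> 0" using \<alpha> by (simp add: e_def)
  have C: "powr_exp_const (k+e) \<ge> 0" using k e by (intro powr_exp_const_nonneg) simp
  have "((x-y)\<^sup>2) powr (-(k+e)) = ((x-y)\<^sup>2) powr (-e) * ((x-y)\<^sup>2) powr (-k)"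
  proof -
    have "-(k+e) = -e + -k" by simp
    then show ?thesis by (simp only: powr_add)
  qed
  also have "\<dots> \<le> 4 powr e * ((x+y)\<^sup>2) powr (-e) * ((x-y)\<^sup>2) powr (-k)"
    using x y separated e by (intro mult_right_mono powr_neg_le_of_le) auto
  finally have diff_le: "((x-y)\<^sup>2) powr (-(k+e)) \<le> 4 powr e * ((x+y)\<^sup>2) powr (-e) * ((x-y)\<^sup>2) powr (-k)" .
  have "I_int \<nu> k x y \<le> ennreal (exp 2 / pi * 2 powr ((\<nu>-\<alpha>)-1-\<nu>) * (x*y) powr (-(\<nu>-\<alpha>))
      * powr_exp_const (k+\<nu>+1/2-(\<nu>-\<alpha>)) * ((x-y)\<^sup>2) powr (-(k+\<nu>+1/2-(\<nu>-\<alpha>))))"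
    using \<nu> \<alpha> x y xy k nn_integral_gamma_kernel_le_powr[of "\<nu>+1/2" _ "\<nu>-\<alpha>"]
    by (intro I_int_le_of_kernel_bound) auto
  also have "\<dots> = ennreal (exp 2 * 2 powr (-1-\<alpha>) / pi * powr_exp_const (k+e) * (x*y) powr (-(\<nu>-\<alpha>))
      * ((x-y)\<^sup>2) powr (-(k+e)))"
  proof -
    have "(\<nu>-\<alpha>)-1-\<nu> = -1-\<alpha>" "k+\<nu>+1/2-(\<nu>-\<alpha>) = k+e" by (simp_all add: e_def)
    then show ?thesis by (simp only: mult_ac times_divide_eq_left)
  qed
  also have "\<dots> \<le> ennreal (exp 2 * 2 powr (-1-\<alpha>) / pi * powr_exp_const (k+e) * (x*y) powr (-(\<nu>-\<alpha>))
      * (4 powr e * ((x+y)\<^sup>2) powr (-e) * ((x-y)\<^sup>2) powr (-k)))"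
    using diff_le C by (intro ennreal_leI mult_left_mono) auto
  finally show ?thesis by (simp add: e_def add.assoc mult_ac)
qed

lemma power2_powr_neg:
  fixes t r :: real
  shows "(t\<^sup>2) powr (-r) = inverse (\<bar>t\<bar> powr (2*r))"
proof -
  have "(t\<^sup>2) powr (-r) = (\<bar>t\<bar> powr 2) powr (-r)" by simp
  also have "\<dots> = \<bar>t\<bar> powr (2 * -r)" by (rule powr_powr)
  finally show ?thesis by (simp add: powr_minus)
qed

lemma I_int_le:
  fixes \<alpha> k :: real
  assumes \<alpha>: "\<alpha> \<ge> -1/2" and k: "k > 0"
  obtains C where "\<And>\<nu> x y. \<nu> \<ge> \<alpha> + 1 \<Longrightarrow> x > 0 \<Longrightarrow> y > 0 \<Longrightarrow> x \<noteq> y \<Longrightarrow>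
      I_int \<nu> k x y \<le> ennreal (C / ((x+y) powr (2*\<alpha>+1) * (x*y) powr (\<nu>-\<alpha>) * \<bar>x-y\<bar> powr (2*k)))"
proof
  define C\<^sub>1 where "C\<^sub>1 = 2 powr (-1/2) / pi * powr_exp_const k * 16 powr (\<alpha>+1/2)"
  define C\<^sub>2 where "C\<^sub>2 = exp 2 * 2 powr (-1-\<alpha>) / pi * powr_exp_const (k+\<alpha>+1/2) * 4 powr (\<alpha>+1/2)"
  have C: "C\<^sub>1 \<ge> 0" "C\<^sub>2 \<ge> 0"
    using k \<alpha> by (simp_all add: C\<^sub>1_def C\<^sub>2_def powr_exp_const_nonneg)
  fix \<nu> x y :: real
  assume \<nu>: "\<nu> \<ge> \<alpha> + 1" and x: "x > 0" and y: "y > 0" and xy: "x \<noteq> y"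
  define T where "T = ((x+y)\<^sup>2) powr (-(\<alpha>+1/2)) * (x*y) powr (-(\<nu>-\<alpha>)) * ((x-y)\<^sup>2) powr (-k)"
  have T: "T \<ge> 0" by (simp add: T_def)
  have "I_int \<nu> k x y \<le> ennreal (C\<^sub>1 * T) \<or> I_int \<nu> k x y \<le> ennreal (C\<^sub>2 * T)"
  proof (cases "(x+y)\<^sup>2 \<le> 16 * (x*y)")
    case True
    then show ?thesis
      using I_int_le_comparable[OF \<alpha> \<nu> k x y xy] by (simp add: C\<^sub>1_def T_def mult_ac)
  next
    case False
    moreover have "(x-y)\<^sup>2 = (x+y)\<^sup>2 - 4 * (x*y)"
      by (simp add: power2_eq_square algebra_simps)
    moreover have "x * y > 0" using x y by simp
    ultimately have "(x+y)\<^sup>2 \<le> 4 * (x-y)\<^sup>2" by linarith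
    then show ?thesis
      using I_int_le_separated[OF \<alpha> \<nu> k x y xy] by (simp add: C\<^sub>2_def T_def mult_ac)
  qed
  moreover have "ennreal (C\<^sub>1 * T) \<le> ennreal ((C\<^sub>1 + C\<^sub>2) * T)" "ennreal (C\<^sub>2 * T) \<le> ennreal ((C\<^sub>1 + C\<^sub>2) * T)"
    using C T by (auto intro!: ennreal_leI mult_right_mono)
  ultimately have "I_int \<nu> k x y \<le> ennreal ((C\<^sub>1 + C\<^sub>2) * T)"
    by (meson order_trans)
  also have "(C\<^sub>1 + C\<^sub>2) * T = (C\<^sub>1 + C\<^sub>2) / ((x+y) powr (2*\<alpha>+1) * (x*y) powr (\<nu>-\<alpha>) * \<bar>x-y\<bar> powr (2*k))"
  proof -
    have "((x+y)\<^sup>2) powr (-(\<alpha>+1/2)) = inverse (\<bar>x+y\<bar> powr (2*(\<alpha>+1/2)))"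
      by (rule power2_powr_neg)
    also have "2*(\<alpha>+1/2) = 2*\<alpha>+1" by simp
    also have "\<bar>x+y\<bar> = x+y" using x y by simp
    finally have sum: "((x+y)\<^sup>2) powr (-(\<alpha>+1/2)) = inverse ((x+y) powr (2*\<alpha>+1))" .
    show ?thesis
      unfolding T_def sum powr_minus[of "x*y"] power2_powr_neg[of "x-y"]
      by (simp only: divide_inverse inverse_mult_distrib mult.assoc)
  qed
  finally show "I_int \<nu> k x y \<le> ennreal ((C\<^sub>1 + C\<^sub>2) / ((x+y) powr (2*\<alpha>+1) * (x*y) powr (\<nu>-\<alpha>) * \<bar>x-y\<bar> powr (2*k)))" .
qed

theorem mainTheorem7:
  fixes \<alpha> k :: real
  assumes "\<alpha> \<ge> -1/2" and "k > 0"
  shows "\<exists>C::real. \<forall>(a::real) (j::nat) (x::real) (y::real).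
           a \<ge> 1 \<longrightarrow> j \<ge> 1 \<longrightarrow> x > 0 \<longrightarrow> y > 0 \<longrightarrow> x \<noteq> y \<longrightarrow>
           I_int (\<alpha> + a * real j) k x y
             \<le> ennreal (C / ((x + y) powr (2*\<alpha> + 1) * (x*y) powr (a * real j) * \<bar>x - y\<bar> powr (2*k)))"
proof -
  obtain C where C: "\<And>\<nu> x y. \<nu> \<ge> \<alpha> + 1 \<Longrightarrow> x > 0 \<Longrightarrow> y > 0 \<Longrightarrow> x \<noteq> y \<Longrightarrow>
      I_int \<nu> k x y \<le> ennreal (C / ((x+y) powr (2*\<alpha>+1) * (x*y) powr (\<nu>-\<alpha>) * \<bar>x-y\<bar> powr (2*k)))"
    using I_int_le[OF assms] by blast
  have "I_int (\<alpha> + a * real j) k x y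
      \<le> ennreal (C / ((x + y) powr (2*\<alpha> + 1) * (x*y) powr (a * real j) * \<bar>x - y\<bar> powr (2*k)))"
    if "a \<ge> 1" "j \<ge> 1" "x > 0" "y > 0" "x \<noteq> y" for a j x y
  proof -
    have "1 * 1 \<le> a * real j" using that by (intro mult_mono) auto
    then show ?thesis using C[of "\<alpha> + a * real j" x y] that by simp
  qed
  then show ?thesis by blast
qed

end
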